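(* For every $x\in\mathcal X$, as $\mu\ge0$ increases: (1) $\hat p_{C^\mu(x)}(x)$ is non-decreasing; (2) $w(C^\mu(x))\hat p_{C^\mu(x)}(x)$ is non-increasing; (3) $D^\mu(x)$ is non-increasing; (4) $w(C^\mu(x))\hat p_{C^\mu(x)}(x)D^\mu(x)$ is non-increasing; (5) $(1-\hat p_{C^\mu(x)}(x)-\alpha)D^\mu(x)$ is non-increasing.
   Context: Let $\alpha\in(0,1)$. $\mathcal I$ is a finite collection of subsets of $\mathcal Y$ enumerated in a fixed lexicographic order, and $w:\mathcal I\to(0,B)$ a bounded positive weight. For $x\in\mathcal X$, $C\in\mathcal I$, $\hat p_C(x)\in[0,1]$ is a fixed estimate of $\mathbb P(Y\in C\mid X=x)$. For $\mu\ge0$ let $\hat\ell_{x,C}(\mu)=w(C)\hat p_C(x)+\mu(\hat p_C(x)-(1-\alpha))$. $C^\mu(x)$ is a maximizer of $\hat\ell_{x,C}(\mu)$ over $C\in\mathcal I$, ties broken in favor of the smallest weight $w(C)$ and then the smallest index; $D^\mu(x)=\mathbb 1\{\max_{C\in\mathcal I}\hat\ell_{x,C}(\mu)>0\}$. *)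

theory Defs
  imports Main "HOL.Real"
begin

text \<open>The finite collection I is given as a list Cs of distinct subsets of the
  outcome type 'y; the list order is the fixed (lexicographic) enumeration,
  so the index of C is its position in Cs.\<close>

definition ell :: "('y set \<Rightarrow> real) \<Rightarrow> ('x \<Rightarrow> 'y set \<Rightarrow> real) \<Rightarrow> real
    \<Rightarrow> 'x \<Rightarrow> 'y set \<Rightarrow> real \<Rightarrow> real" where
  "ell w phat \<alpha> x C \<mu> = w C * phat x C + \<mu> * (phat x C - (1 - \<alpha>))"

definition lmax :: "'y set list \<Rightarrow> ('y set \<Rightarrow> real) \<Rightarrow> ('x \<Rightarrow> 'y set \<Rightarrow> real)
    \<Rightarrow> real \<Rightarrow> 'x \<Rightarrow> real \<Rightarrow> real" where
  "lmax Cs w phat \<alpha> x \<mu> = Max ((\<lambda>C. ell w phat \<alpha> x C \<mu>) ` set Cs)"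

definition maximizers :: "'y set list \<Rightarrow> ('y set \<Rightarrow> real) \<Rightarrow> ('x \<Rightarrow> 'y set \<Rightarrow> real)
    \<Rightarrow> real \<Rightarrow> 'x \<Rightarrow> real \<Rightarrow> 'y set set" where
  "maximizers Cs w phat \<alpha> x \<mu> =
     {C \<in> set Cs. ell w phat \<alpha> x C \<mu> = lmax Cs w phat \<alpha> x \<mu>}"

definition Cmu :: "'y set list \<Rightarrow> ('y set \<Rightarrow> real) \<Rightarrow> ('x \<Rightarrow> 'y set \<Rightarrow> real)
    \<Rightarrow> real \<Rightarrow> 'x \<Rightarrow> real \<Rightarrow> 'y set" where
  "Cmu Cs w phat \<alpha> x \<mu> =
     Cs ! (LEAST i. i < length Cs \<and> Cs ! i \<in> maximizers Cs w phat \<alpha> x \<mu> \<and>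
                    w (Cs ! i) = Min (w ` maximizers Cs w phat \<alpha> x \<mu>))"

definition Dmu :: "'y set list \<Rightarrow> ('y set \<Rightarrow> real) \<Rightarrow> ('x \<Rightarrow> 'y set \<Rightarrow> real)
    \<Rightarrow> real \<Rightarrow> 'x \<Rightarrow> real \<Rightarrow> real" where
  "Dmu Cs w phat \<alpha> x \<mu> = (if lmax Cs w phat \<alpha> x \<mu> > 0 then 1 else 0)"

end

theory Submission
  imports Defs
begin

text \<open>For fixed x, each score \<open>\<mu> \<mapsto> ell C \<mu>\<close> is affine in \<mu> with slope
  \<open>phat x C - (1 - \<alpha>)\<close> and intercept \<open>w C * phat x C \<ge> 0\<close>. The exchange argument
  for maximizers of affine families shows that the slope of the chosen maximizer can only
  grow with \<mu>, and then its intercept can only shrink. A non-positive score at some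
  \<mu> \<ge> 0 forces a non-positive slope, so that score stays non-positive for larger \<mu>;
  hence once all scores are non-positive they stay so, which gives the monotonicity of D
  and of the two products with D.\<close>

lemma slope_le_of_affine_argmax:
  fixes a1 a2 b1 b2 \<mu>1 \<mu>2 :: real
  assumes "a2 + \<mu>1 * b2 \<le> a1 + \<mu>1 * b1" and "a1 + \<mu>2 * b1 \<le> a2 + \<mu>2 * b2"
    and "\<mu>1 < \<mu>2"
  shows "b1 \<le> b2"
proof -
  have "0 \<le> (\<mu>2 - \<mu>1) * (b2 - b1)"
    using assms(1,2) by (simp add: algebra_simps)
  with \<open>\<mu>1 < \<mu>2\<close> show ?thesis
    by (simp add: zero_le_mult_iff)
qed

lemma Dmu_nonneg: "0 \<le> Dmu Cs w phat \<alpha> x \<mu>"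
  by (simp add: Dmu_def)

context
  fixes Cs :: "'y set list" and w :: "'y set \<Rightarrow> real"
    and phat :: "'x \<Rightarrow> 'y set \<Rightarrow> real" and \<alpha> :: real
  assumes nonempty: "Cs \<noteq> []"
begin

lemma Cmu_in_maximizers: "Cmu Cs w phat \<alpha> x \<mu> \<in> maximizers Cs w phat \<alpha> x \<mu>"
proof -
  let ?M = "maximizers Cs w phat \<alpha> x \<mu>"
  let ?P = "\<lambda>i. i < length Cs \<and> Cs ! i \<in> ?M \<and> w (Cs ! i) = Min (w ` ?M)"
  have "lmax Cs w phat \<alpha> x \<mu> \<in> (\<lambda>C. ell w phat \<alpha> x C \<mu>) ` set Cs"
    unfolding lmax_def using nonempty by (intro Max_in) auto
  then have "?M \<noteq> {}"
    unfolding maximizers_def by force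
  moreover have "finite ?M"
    unfolding maximizers_def by simp
  ultimately have "Min (w ` ?M) \<in> w ` ?M"
    by (intro Min_in) auto
  then obtain C where "C \<in> ?M" and "w C = Min (w ` ?M)"
    by (metis imageE)
  moreover from \<open>C \<in> ?M\<close> obtain i where "i < length Cs" and "Cs ! i = C"
    unfolding maximizers_def by (auto simp: in_set_conv_nth)
  ultimately have "?P i"
    by simp
  then have "?P (LEAST i. ?P i)"
    by (rule LeastI)
  then show ?thesis
    unfolding Cmu_def by simp
qed

lemma Cmu_in_set: "Cmu Cs w phat \<alpha> x \<mu> \<in> set Cs"
  using Cmu_in_maximizers unfolding maximizers_def by blast

lemma lmax_eq_ell_Cmu: "lmax Cs w phat \<alpha> x \<mu> = ell w phat \<alpha> x (Cmu Cs w phat \<alpha> x \<mu>) \<mu>"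
  using Cmu_in_maximizers unfolding maximizers_def by simp

lemma ell_le_ell_Cmu:
  assumes "C \<in> set Cs"
  shows "ell w phat \<alpha> x C \<mu> \<le> ell w phat \<alpha> x (Cmu Cs w phat \<alpha> x \<mu>) \<mu>"
  using assms unfolding lmax_eq_ell_Cmu[symmetric] lmax_def by simp

lemma phat_Cmu_mono:
  assumes "\<mu>1 \<le> \<mu>2"
  shows "phat x (Cmu Cs w phat \<alpha> x \<mu>1) \<le> phat x (Cmu Cs w phat \<alpha> x \<mu>2)"
proof (cases "\<mu>1 = \<mu>2")
  case False
  let ?C1 = "Cmu Cs w phat \<alpha> x \<mu>1" and ?C2 = "Cmu Cs w phat \<alpha> x \<mu>2"
  have "ell w phat \<alpha> x ?C2 \<mu>1 \<le> ell w phat \<alpha> x ?C1 \<mu>1"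
    and "ell w phat \<alpha> x ?C1 \<mu>2 \<le> ell w phat \<alpha> x ?C2 \<mu>2"
    by (simp_all add: ell_le_ell_Cmu Cmu_in_set)
  moreover from False assms have "\<mu>1 < \<mu>2"
    by simp
  ultimately have "phat x ?C1 - (1 - \<alpha>) \<le> phat x ?C2 - (1 - \<alpha>)"
    unfolding ell_def by (rule slope_le_of_affine_argmax)
  then show ?thesis
    by simp
qed simp

lemma weighted_phat_Cmu_antimono:
  assumes "0 \<le> \<mu>1" and "\<mu>1 \<le> \<mu>2"
  shows "w (Cmu Cs w phat \<alpha> x \<mu>2) * phat x (Cmu Cs w phat \<alpha> x \<mu>2)
    \<le> w (Cmu Cs w phat \<alpha> x \<mu>1) * phat x (Cmu Cs w phat \<alpha> x \<mu>1)"
proof -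
  let ?C1 = "Cmu Cs w phat \<alpha> x \<mu>1" and ?C2 = "Cmu Cs w phat \<alpha> x \<mu>2"
  have "ell w phat \<alpha> x ?C2 \<mu>1 \<le> ell w phat \<alpha> x ?C1 \<mu>1"
    by (simp add: ell_le_ell_Cmu Cmu_in_set)
  moreover have "\<mu>1 * (phat x ?C1 - (1 - \<alpha>)) \<le> \<mu>1 * (phat x ?C2 - (1 - \<alpha>))"
    using assms phat_Cmu_mono by (intro mult_left_mono) auto
  ultimately show ?thesis
    unfolding ell_def by linarith
qed

context
  assumes alpha_le_1: "\<alpha> \<le> 1"
    and wpos: "\<And>C. C \<in> set Cs \<Longrightarrow> 0 < w C"
    and phat_nonneg: "\<And>x C. C \<in> set Cs \<Longrightarrow> 0 \<le> phat x C"
begin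

lemma phat_le_of_ell_nonpos:
  assumes "C \<in> set Cs" and "0 \<le> \<mu>" and "ell w phat \<alpha> x C \<mu> \<le> 0"
  shows "phat x C \<le> 1 - \<alpha>"
proof (rule ccontr)
  assume "\<not> phat x C \<le> 1 - \<alpha>"
  with alpha_le_1 have "0 < phat x C"
    by linarith
  with wpos[OF \<open>C \<in> set Cs\<close>] have "0 < w C * phat x C"
    by simp
  moreover from \<open>\<not> phat x C \<le> 1 - \<alpha>\<close> \<open>0 \<le> \<mu>\<close> have "0 \<le> \<mu> * (phat x C - (1 - \<alpha>))"
    by simp
  ultimately show False
    using assms(3) unfolding ell_def by linarith
qed

lemma ell_nonpos_antimono:
  assumes "C \<in> set Cs" and "0 \<le> \<mu>1" and "\<mu>1 \<le> \<mu>2" and "ell w phat \<alpha> x C \<mu>1 \<le> 0"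
  shows "ell w phat \<alpha> x C \<mu>2 \<le> 0"
proof -
  have "phat x C - (1 - \<alpha>) \<le> 0"
    using phat_le_of_ell_nonpos assms by simp
  with \<open>\<mu>1 \<le> \<mu>2\<close> have "\<mu>2 * (phat x C - (1 - \<alpha>)) \<le> \<mu>1 * (phat x C - (1 - \<alpha>))"
    by (rule mult_right_mono_neg)
  with assms(4) show ?thesis
    unfolding ell_def by linarith
qed

lemma Dmu_eq_0_iff: "Dmu Cs w phat \<alpha> x \<mu> = 0 \<longleftrightarrow> ell w phat \<alpha> x (Cmu Cs w phat \<alpha> x \<mu>) \<mu> \<le> 0"
  unfolding Dmu_def lmax_eq_ell_Cmu by simp

lemma Dmu_antimono:
  assumes "0 \<le> \<mu>1" and "\<mu>1 \<le> \<mu>2"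
  shows "Dmu Cs w phat \<alpha> x \<mu>2 \<le> Dmu Cs w phat \<alpha> x \<mu>1"
proof (cases "Dmu Cs w phat \<alpha> x \<mu>1 = 0")
  case True
  let ?C1 = "Cmu Cs w phat \<alpha> x \<mu>1" and ?C2 = "Cmu Cs w phat \<alpha> x \<mu>2"
  have "ell w phat \<alpha> x ?C2 \<mu>1 \<le> ell w phat \<alpha> x ?C1 \<mu>1"
    by (simp add: ell_le_ell_Cmu Cmu_in_set)
  with True have "ell w phat \<alpha> x ?C2 \<mu>1 \<le> 0"
    unfolding Dmu_eq_0_iff by linarith
  then have "ell w phat \<alpha> x ?C2 \<mu>2 \<le> 0"
    by (rule ell_nonpos_antimono[OF Cmu_in_set assms])
  then show ?thesis
    using True unfolding Dmu_eq_0_iff[symmetric] by simp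
qed (simp add: Dmu_def split: if_splits)

lemma phat_le_of_Dmu_eq_0:
  assumes "C \<in> set Cs" and "0 \<le> \<mu>" and "Dmu Cs w phat \<alpha> x \<mu> = 0"
  shows "phat x C \<le> 1 - \<alpha>"
proof -
  have "ell w phat \<alpha> x C \<mu> \<le> 0"
    using assms ell_le_ell_Cmu[of C x \<mu>] unfolding Dmu_eq_0_iff by linarith
  with assms show ?thesis
    by (intro phat_le_of_ell_nonpos)
qed

lemma Dmu_eq_1_of_Dmu_ne_0:
  assumes "0 \<le> \<mu>1" and "\<mu>1 \<le> \<mu>2" and "Dmu Cs w phat \<alpha> x \<mu>2 \<noteq> 0"
  shows "Dmu Cs w phat \<alpha> x \<mu>2 = 1" and "Dmu Cs w phat \<alpha> x \<mu>1 = 1"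
  using assms(3) Dmu_antimono[OF assms(1,2), of x] by (simp_all add: Dmu_def split: if_splits)

lemma weighted_phat_Cmu_Dmu_antimono:
  assumes "0 \<le> \<mu>1" and "\<mu>1 \<le> \<mu>2"
  shows "w (Cmu Cs w phat \<alpha> x \<mu>2) * phat x (Cmu Cs w phat \<alpha> x \<mu>2) * Dmu Cs w phat \<alpha> x \<mu>2
    \<le> w (Cmu Cs w phat \<alpha> x \<mu>1) * phat x (Cmu Cs w phat \<alpha> x \<mu>1) * Dmu Cs w phat \<alpha> x \<mu>1"
proof (cases "Dmu Cs w phat \<alpha> x \<mu>2 = 0")
  case True
  have "0 \<le> w (Cmu Cs w phat \<alpha> x \<mu>1) * phat x (Cmu Cs w phat \<alpha> x \<mu>1)"
    using wpos phat_nonneg Cmu_in_set by (simp add: less_imp_le)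
  with True show ?thesis
    by (simp add: mult_nonneg_nonneg Dmu_nonneg)
next
  case False
  with assms have "Dmu Cs w phat \<alpha> x \<mu>2 = 1" and "Dmu Cs w phat \<alpha> x \<mu>1 = 1"
    by (rule Dmu_eq_1_of_Dmu_ne_0)+
  with weighted_phat_Cmu_antimono[OF assms] show ?thesis
    by simp
qed

lemma slack_Cmu_Dmu_antimono:
  assumes "0 \<le> \<mu>1" and "\<mu>1 \<le> \<mu>2"
  shows "(1 - phat x (Cmu Cs w phat \<alpha> x \<mu>2) - \<alpha>) * Dmu Cs w phat \<alpha> x \<mu>2
    \<le> (1 - phat x (Cmu Cs w phat \<alpha> x \<mu>1) - \<alpha>) * Dmu Cs w phat \<alpha> x \<mu>1"
proof (cases "Dmu Cs w phat \<alpha> x \<mu>2 = 0")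
  case True
  have "0 \<le> \<mu>2"
    using assms by linarith
  with Cmu_in_set have "phat x (Cmu Cs w phat \<alpha> x \<mu>1) \<le> 1 - \<alpha>"
    using True by (rule phat_le_of_Dmu_eq_0)
  then have "0 \<le> 1 - phat x (Cmu Cs w phat \<alpha> x \<mu>1) - \<alpha>"
    by simp
  with True show ?thesis
    by (simp add: mult_nonneg_nonneg Dmu_nonneg)
next
  case False
  with assms have "Dmu Cs w phat \<alpha> x \<mu>2 = 1" and "Dmu Cs w phat \<alpha> x \<mu>1 = 1"
    by (rule Dmu_eq_1_of_Dmu_ne_0)+
  with phat_Cmu_mono[OF assms(2)] show ?thesis
    by simp
qed

end

end

theorem proposition9:
  fixes Cs :: "'y set list" and w :: "'y set \<Rightarrow> real"
    and phat :: "'x \<Rightarrow> 'y set \<Rightarrow> real" and \<alpha> B :: real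
  assumes alpha: "0 < \<alpha>" "\<alpha> < 1"
    and distinct: "distinct Cs" and nonempty: "Cs \<noteq> []"
    and wpos: "\<And>C. C \<in> set Cs \<Longrightarrow> 0 < w C \<and> w C < B"
    and prange: "\<And>x C. C \<in> set Cs \<Longrightarrow> 0 \<le> phat x C \<and> phat x C \<le> 1"
  shows "\<forall>x \<mu>1 \<mu>2. 0 \<le> \<mu>1 \<and> \<mu>1 \<le> \<mu>2 \<longrightarrow>
      phat x (Cmu Cs w phat \<alpha> x \<mu>1) \<le> phat x (Cmu Cs w phat \<alpha> x \<mu>2)
    \<and> w (Cmu Cs w phat \<alpha> x \<mu>2) * phat x (Cmu Cs w phat \<alpha> x \<mu>2)
        \<le> w (Cmu Cs w phat \<alpha> x \<mu>1) * phat x (Cmu Cs w phat \<alpha> x \<mu>1)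
    \<and> Dmu Cs w phat \<alpha> x \<mu>2 \<le> Dmu Cs w phat \<alpha> x \<mu>1
    \<and> w (Cmu Cs w phat \<alpha> x \<mu>2) * phat x (Cmu Cs w phat \<alpha> x \<mu>2) * Dmu Cs w phat \<alpha> x \<mu>2
        \<le> w (Cmu Cs w phat \<alpha> x \<mu>1) * phat x (Cmu Cs w phat \<alpha> x \<mu>1) * Dmu Cs w phat \<alpha> x \<mu>1
    \<and> (1 - phat x (Cmu Cs w phat \<alpha> x \<mu>2) - \<alpha>) * Dmu Cs w phat \<alpha> x \<mu>2
        \<le> (1 - phat x (Cmu Cs w phat \<alpha> x \<mu>1) - \<alpha>) * Dmu Cs w phat \<alpha> x \<mu>1"
proof -
  have "\<alpha> \<le> 1" and w_pos: "\<And>C. C \<in> set Cs \<Longrightarrow> 0 < w C"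
    and phat_nonneg: "\<And>x C. C \<in> set Cs \<Longrightarrow> 0 \<le> phat x C"
    using alpha wpos prange by simp_all
  note Cmu_monotonicity = phat_Cmu_mono weighted_phat_Cmu_antimono
  note Dmu_monotonicity = Dmu_antimono weighted_phat_Cmu_Dmu_antimono slack_Cmu_Dmu_antimono
  show ?thesis
    by (intro allI impI conjI; elim conjE;
        rule Cmu_monotonicity[where w = w and phat = phat, OF nonempty]
          Dmu_monotonicity[where w = w and phat = phat, OF nonempty \<open>\<alpha> \<le> 1\<close> w_pos phat_nonneg];
        assumption)
qed

end
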